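(* Let $r\ge2$ and $\alpha,\delta>0$ with $\delta\le\alpha$, $\delta\le 1/(2r)$ and $\alpha<1/(4r(r+1))$. Let $Q$ be an $[r]$-coloured graph on a subset of $[n]$, let $\mathcal{C}$ be a nonempty family of $\delta$-balanced $r$-cuts of $[n]$ each compatible with $Q$, and let $\xi\le1$. Suppose that for every ordered $r$-tuple $S=(S_1,\dots,S_r)$ of pairwise disjoint subsets of $[n]$ that is compatible with $Q$ and satisfies $\min_i|S_i|\ge(1-4r\alpha)n/r$ we are given an event $F(S)$ about a graph $G$ on $[n]$ that is decreasing (closed under deleting edges) and determined by $G\cap\mathrm{ext}(S)$, and satisfies $\Pr(F(S)\mid Q\subseteq G_{n,p})\le\xi$. Let $\mathcal{R}$ be the event that $G_{n,p}$ is $\mathcal{C}$-rigid and its $\mathcal{C}$-core can be labelled $\{S_1,\dots,S_r\}$ with $V^i(Q)\subseteq S_i$ for all $i\in[r]$ such that $F(S_1,\dots,S_r)$ holds. Then $\Pr(\mathcal{R}\mid Q\subseteq G_{n,p})\le r!\cdot\xi$.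
   Context: An $[r]$-coloured graph has vertices coloured from $[r]$ (not necessarily properly); $V^k(Q)$ is the set of vertices of colour $k$. A tuple $(V_1,\dots,V_r)$ of pairwise disjoint sets is compatible with $Q$ if $V^k(Q)\subseteq V_k$ for all $k$. An $r$-cut is an ordered partition of $[n]$ into $r$ parts; it is $\delta$-balanced if each part has size $(1\pm\delta)n/r$; $\mathrm{ext}(S)$ is the set of pairs meeting two distinct $S_i$. $b_{\mathcal{C}}(G)=\max_{\Pi\in\mathcal{C}}|G\cap\mathrm{ext}(\Pi)|$, $\mathrm{maxcut}_{\mathcal{C}}(G)$ is the set of $\Pi\in\mathcal{C}$ attaining it; $x\equiv_{\mathcal{C},G}y$ if $x,y$ lie in the same part of every cut in $\mathrm{maxcut}_{\mathcal{C}}(G)$, and the classes are $(\mathcal{C},G)$-components. $G$ is $\mathcal{C}$-rigid if at least $(1-\alpha)n^2/(2r)$ unordered pairs of distinct vertices are equivalent. For a $\mathcal{C}$-rigid $G$ there are exactly $r$ components of size greater than $(1-4r\alpha)n/r$; this unordered collection is the $\mathcal{C}$-core of $G$. $Q\subseteq G_{n,p}$ means all edges of $Q$ are in $G_{n,p}$. *)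

theory Defs
  imports Main "HOL.Real"
begin

text \<open>Vertex set [n] = {1..n}; colours and part indices range over [r] = {1..r}.
  A graph on [n] is a set of 2-element subsets of [n].  Tuples / cuts are
  functions nat => nat set that are empty outside [r].\<close>

definition all_pairs :: "nat \<Rightarrow> nat set set" where
  "all_pairs n = {{x, y} | x y. x \<in> {1..n} \<and> y \<in> {1..n} \<and> x \<noteq> y}"

definition gnp_prob :: "nat \<Rightarrow> real \<Rightarrow> nat set set set \<Rightarrow> real" where
  "gnp_prob n p A = (\<Sum>G\<in>Pow (all_pairs n).
      if G \<in> A then p ^ card G * (1 - p) ^ (card (all_pairs n) - card G) else 0)"

definition gnp_cond :: "nat \<Rightarrow> real \<Rightarrow> nat set set set \<Rightarrow> nat set set set \<Rightarrow> real" where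
  "gnp_cond n p A B = gnp_prob n p (A \<inter> B) / gnp_prob n p B"

definition coloured_graph :: "nat \<Rightarrow> nat \<Rightarrow> nat set \<Rightarrow> (nat \<Rightarrow> nat) \<Rightarrow> nat set set \<Rightarrow> bool" where
  "coloured_graph n r VQ col EQ \<longleftrightarrow> VQ \<subseteq> {1..n} \<and> (\<forall>v\<in>VQ. col v \<in> {1..r}) \<and>
     EQ \<subseteq> {{x, y} | x y. x \<in> VQ \<and> y \<in> VQ \<and> x \<noteq> y}"

definition colour_class :: "nat set \<Rightarrow> (nat \<Rightarrow> nat) \<Rightarrow> nat \<Rightarrow> nat set" where
  "colour_class VQ col k = {v \<in> VQ. col v = k}"

definition is_tuple :: "nat \<Rightarrow> (nat \<Rightarrow> nat set) \<Rightarrow> bool" where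
  "is_tuple r S \<longleftrightarrow> (\<forall>i. i \<notin> {1..r} \<longrightarrow> S i = {})"

definition pw_disjoint :: "nat \<Rightarrow> (nat \<Rightarrow> nat set) \<Rightarrow> bool" where
  "pw_disjoint r S \<longleftrightarrow> (\<forall>i\<in>{1..r}. \<forall>j\<in>{1..r}. i \<noteq> j \<longrightarrow> S i \<inter> S j = {})"

definition compatible :: "nat \<Rightarrow> nat set \<Rightarrow> (nat \<Rightarrow> nat) \<Rightarrow> (nat \<Rightarrow> nat set) \<Rightarrow> bool" where
  "compatible r VQ col S \<longleftrightarrow> (\<forall>k\<in>{1..r}. colour_class VQ col k \<subseteq> S k)"

definition is_cut :: "nat \<Rightarrow> nat \<Rightarrow> (nat \<Rightarrow> nat set) \<Rightarrow> bool" where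
  "is_cut n r P \<longleftrightarrow> is_tuple r P \<and> pw_disjoint r P \<and> (\<Union>i\<in>{1..r}. P i) = {1..n}"

definition balanced_cut :: "nat \<Rightarrow> nat \<Rightarrow> real \<Rightarrow> (nat \<Rightarrow> nat set) \<Rightarrow> bool" where
  "balanced_cut n r \<delta> P \<longleftrightarrow> is_cut n r P \<and>
     (\<forall>i\<in>{1..r}. (1 - \<delta>) * real n / real r \<le> real (card (P i)) \<and>
                 real (card (P i)) \<le> (1 + \<delta>) * real n / real r)"

definition ext :: "nat \<Rightarrow> (nat \<Rightarrow> nat set) \<Rightarrow> nat set set" where
  "ext r S = {{x, y} | x y i j. i \<in> {1..r} \<and> j \<in> {1..r} \<and> i \<noteq> j \<and> x \<in> S i \<and> y \<in> S j}"

definition bval :: "nat \<Rightarrow> (nat \<Rightarrow> nat set) set \<Rightarrow> nat set set \<Rightarrow> nat" where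
  "bval r C G = Max ((\<lambda>P. card (G \<inter> ext r P)) ` C)"

definition maxcut :: "nat \<Rightarrow> (nat \<Rightarrow> nat set) set \<Rightarrow> nat set set \<Rightarrow> (nat \<Rightarrow> nat set) set" where
  "maxcut r C G = {P \<in> C. card (G \<inter> ext r P) = bval r C G}"

definition cequiv :: "nat \<Rightarrow> (nat \<Rightarrow> nat set) set \<Rightarrow> nat set set \<Rightarrow> nat \<Rightarrow> nat \<Rightarrow> bool" where
  "cequiv r C G x y \<longleftrightarrow> (\<forall>P\<in>maxcut r C G. \<forall>i\<in>{1..r}. x \<in> P i \<longleftrightarrow> y \<in> P i)"

definition components :: "nat \<Rightarrow> nat \<Rightarrow> (nat \<Rightarrow> nat set) set \<Rightarrow> nat set set \<Rightarrow> nat set set" where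
  "components n r C G = {{y \<in> {1..n}. cequiv r C G x y} | x. x \<in> {1..n}}"

definition rigid :: "nat \<Rightarrow> nat \<Rightarrow> real \<Rightarrow> (nat \<Rightarrow> nat set) set \<Rightarrow> nat set set \<Rightarrow> bool" where
  "rigid n r \<alpha> C G \<longleftrightarrow>
     real (card {{x, y} | x y. x \<in> {1..n} \<and> y \<in> {1..n} \<and> x \<noteq> y \<and> cequiv r C G x y})
       \<ge> (1 - \<alpha>) * real n ^ 2 / (2 * real r)"

definition core :: "nat \<Rightarrow> nat \<Rightarrow> real \<Rightarrow> (nat \<Rightarrow> nat set) set \<Rightarrow> nat set set \<Rightarrow> nat set set" where
  "core n r \<alpha> C G = {K \<in> components n r C G. real (card K) > (1 - 4 * real r * \<alpha>) * real n / real r}"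

end

theory Submission
  imports Defs "HOL-Library.Indicator_Function" "HOL-Combinatorics.Multiset_Permutations"
begin

text \<open>For an admissible tuple \<open>S\<close> let \<open>U(S)\<close> be the event that \<open>G\<close> is rigid and \<open>S\<close> labels its core.
  Two distinct core components are too large to lie in one part of a balanced cut, so every
  maximum cut separates them; hence adding an edge of \<open>ext(S)\<close> to a graph in \<open>U(S)\<close> keeps the
  maximum cuts, and with them rigidity and the core. Thus \<open>U(S)\<close> is increasing in the edges of
  \<open>ext(S)\<close>, while \<open>F(S)\<close> is decreasing and depends on these edges only. Conditioned on
  \<open>Q \<subseteq> G\<close>, \<open>G\<^sub>n\<^sub>,\<^sub>p\<close> is still a product measure, so Harris' inequality gives
  \<open>Pr(F(S) \<inter> U(S)) \<le> \<xi> Pr(U(S))\<close>. The event in question is covered by the events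
  \<open>F(S) \<inter> U(S)\<close>, and a graph lies in \<open>U(S)\<close> for at most \<open>r!\<close> tuples \<open>S\<close>; summing over \<open>S\<close>
  gives the bound \<open>r! \<xi>\<close>.\<close>

text \<open>The unnormalised expectation of \<open>h\<close> under the product measure on subsets of \<open>E\<close> in which
  \<open>e\<close> is present with weight \<open>a e\<close> and absent with weight \<open>b e\<close>.\<close>
definition weighted_subset_sum ::
    "('a \<Rightarrow> real) \<Rightarrow> ('a \<Rightarrow> real) \<Rightarrow> 'a set \<Rightarrow> ('a set \<Rightarrow> real) \<Rightarrow> real" where
  "weighted_subset_sum a b E h = (\<Sum>A\<in>Pow E. (\<Prod>e\<in>A. a e) * (\<Prod>e\<in>E - A. b e) * h A)"

lemma weighted_subset_sum_insert:
  assumes "finite E" "e \<notin> E"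
  shows "weighted_subset_sum a b (insert e E) h =
    b e * weighted_subset_sum a b E h + a e * weighted_subset_sum a b E (\<lambda>A. h (insert e A))"
proof -
  have inj: "inj_on (insert e) (Pow E)" using assms by (auto simp: inj_on_def)
  have "Pow E \<inter> insert e ` Pow E = {}" using assms by auto
  then have "weighted_subset_sum a b (insert e E) h =
      (\<Sum>A\<in>Pow E. (\<Prod>x\<in>A. a x) * (\<Prod>x\<in>insert e E - A. b x) * h A) +
      (\<Sum>A\<in>Pow E. (\<Prod>x\<in>insert e A. a x) * (\<Prod>x\<in>insert e E - insert e A. b x) * h (insert e A))"
    unfolding weighted_subset_sum_def Pow_insert
    using assms by (simp add: sum.union_disjoint sum.reindex[OF inj])
  also have "\<dots> = b e * weighted_subset_sum a b E h + a e * weighted_subset_sum a b E (\<lambda>A. h (insert e A))"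
    unfolding weighted_subset_sum_def sum_distrib_left
  proof (intro arg_cong2[where f = "(+)"] sum.cong refl)
    fix A assume "A \<in> Pow E"
    then have "insert e E - A = insert e (E - A)" "insert e E - insert e A = E - A" "e \<notin> A" "finite A"
      using assms by (auto intro: finite_subset)
    then show "(\<Prod>x\<in>A. a x) * (\<Prod>x\<in>insert e E - A. b x) * h A = b e * ((\<Prod>x\<in>A. a x) * (\<Prod>x\<in>E - A. b x) * h A)"
      and "(\<Prod>x\<in>insert e A. a x) * (\<Prod>x\<in>insert e E - insert e A. b x) * h (insert e A) =
        a e * ((\<Prod>x\<in>A. a x) * (\<Prod>x\<in>E - A. b x) * h (insert e A))"
      using assms by simp_all
  qed
  finally show ?thesis .
qed

lemma weighted_subset_sum_mono:
  assumes "\<And>e. 0 \<le> a e" "\<And>e. 0 \<le> b e" "\<And>A. A \<subseteq> E \<Longrightarrow> h A \<le> h' A"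
  shows "weighted_subset_sum a b E h \<le> weighted_subset_sum a b E h'"
  unfolding weighted_subset_sum_def
  using assms by (intro sum_mono mult_left_mono) (auto intro!: prod_nonneg mult_nonneg_nonneg)

lemma weighted_subset_sum_nonneg:
  "(\<And>e. 0 \<le> a e) \<Longrightarrow> (\<And>e. 0 \<le> b e) \<Longrightarrow> (\<And>A. A \<subseteq> E \<Longrightarrow> 0 \<le> h A) \<Longrightarrow>
    0 \<le> weighted_subset_sum a b E h"
  using weighted_subset_sum_mono[of a b E "\<lambda>_. 0" h] by (simp add: weighted_subset_sum_def)

lemma weighted_subset_sum_cong:
  "(\<And>A. A \<subseteq> E \<Longrightarrow> h A = h' A) \<Longrightarrow> weighted_subset_sum a b E h = weighted_subset_sum a b E h'"
  unfolding weighted_subset_sum_def by (auto intro!: sum.cong)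

lemma weighted_subset_sum_sum:
  "weighted_subset_sum a b E (\<lambda>A. \<Sum>i\<in>I. h i A) = (\<Sum>i\<in>I. weighted_subset_sum a b E (h i))"
  unfolding weighted_subset_sum_def sum_distrib_left by (rule sum.swap)

lemma weighted_subset_sum_cmult:
  "weighted_subset_sum a b E (\<lambda>A. c * h A) = c * weighted_subset_sum a b E h"
  unfolding weighted_subset_sum_def sum_distrib_left by (simp add: algebra_simps)

lemma harris_step_inequality:
  fixes \<alpha> \<beta> X0 X1 Z F0 F1 G0 G1 :: real
  assumes "0 \<le> \<alpha>" "0 \<le> \<beta>" "X0 * Z \<le> F0 * G0" "X1 * Z \<le> F1 * G1" "(F1 - F0) * (G1 - G0) \<le> 0"
  shows "(\<beta> * X0 + \<alpha> * X1) * ((\<beta> + \<alpha>) * Z) \<le> (\<beta> * F0 + \<alpha> * F1) * (\<beta> * G0 + \<alpha> * G1)"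
proof -
  have "(\<beta> * X0 + \<alpha> * X1) * ((\<beta> + \<alpha>) * Z) = (\<beta> + \<alpha>) * (\<beta> * (X0 * Z) + \<alpha> * (X1 * Z))"
    by (simp add: algebra_simps)
  also have "\<dots> \<le> (\<beta> + \<alpha>) * (\<beta> * (F0 * G0) + \<alpha> * (F1 * G1))"
    using assms by (intro mult_left_mono add_mono) auto
  also have "\<dots> = (\<beta> * F0 + \<alpha> * F1) * (\<beta> * G0 + \<alpha> * G1) + \<alpha> * \<beta> * ((F1 - F0) * (G1 - G0))"
    by algebra
  also have "\<dots> \<le> (\<beta> * F0 + \<alpha> * F1) * (\<beta> * G0 + \<alpha> * G1)"
    using assms by (simp add: mult_nonneg_nonpos)
  finally show ?thesis .
qed

text \<open>Harris' inequality. Since \<open>f\<close> ignores the coordinates outside \<open>D\<close>, \<open>g\<close> need only be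
  monotone in those of \<open>D\<close>.\<close>
lemma weighted_subset_sum_harris:
  assumes "finite E" "\<And>e. 0 \<le> a e" "\<And>e. 0 \<le> b e"
    and "\<And>A e. A \<subseteq> E \<Longrightarrow> e \<in> E \<Longrightarrow> e \<notin> D \<Longrightarrow> f (insert e A) = f A"
    and "\<And>A e. A \<subseteq> E \<Longrightarrow> e \<in> E \<Longrightarrow> e \<in> D \<Longrightarrow> f (insert e A) \<le> f A"
    and "\<And>A e. A \<subseteq> E \<Longrightarrow> e \<in> E \<Longrightarrow> e \<in> D \<Longrightarrow> g A \<le> g (insert e A)"
  shows "weighted_subset_sum a b E (\<lambda>A. f A * g A) * weighted_subset_sum a b E (\<lambda>_. 1)
    \<le> weighted_subset_sum a b E f * weighted_subset_sum a b E g"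
  using assms(1,4-6)
proof (induction E arbitrary: f g rule: finite_induct)
  case empty
  then show ?case by (simp add: weighted_subset_sum_def)
next
  case (insert e E)
  let ?W = "weighted_subset_sum a b E"
  define f1 where "f1 A = f (insert e A)" for A
  define g1 where "g1 A = g (insert e A)" for A
  have without_e: "?W (\<lambda>A. f A * g A) * ?W (\<lambda>_. 1) \<le> ?W f * ?W g"
    by (rule insert.IH; rule insert.prems; blast)
  have with_e: "?W (\<lambda>A. f1 A * g1 A) * ?W (\<lambda>_. 1) \<le> ?W f1 * ?W g1"
    unfolding f1_def g1_def
  proof (rule insert.IH)
    fix A x assume "A \<subseteq> E" "x \<in> E"
    then have A: "insert e A \<subseteq> insert e E" and x: "x \<in> insert e E"
      and swap: "insert e (insert x A) = insert x (insert e A)" by auto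
    show "f (insert e (insert x A)) = f (insert e A)" if "x \<notin> D"
      unfolding swap using A x that by (rule insert.prems(1))
    show "f (insert e (insert x A)) \<le> f (insert e A)" if "x \<in> D"
      unfolding swap using A x that by (rule insert.prems(2))
    show "g (insert e A) \<le> g (insert e (insert x A))" if "x \<in> D"
      unfolding swap using A x that by (rule insert.prems(3))
  qed
  have "(?W f1 - ?W f) * (?W g1 - ?W g) \<le> 0"
  proof (cases "e \<in> D")
    case True
    have "?W f1 \<le> ?W f"
      unfolding f1_def by (intro weighted_subset_sum_mono assms(2,3) insert.prems(2)) (use True in auto)
    moreover have "?W g \<le> ?W g1"
      unfolding g1_def by (intro weighted_subset_sum_mono assms(2,3) insert.prems(3)) (use True in auto)
    ultimately show ?thesis by (simp add: mult_nonpos_nonneg)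
  next
    case False
    have "?W f1 = ?W f"
      unfolding f1_def by (intro weighted_subset_sum_cong insert.prems(1)) (use False in auto)
    then show ?thesis by simp
  qed
  then show ?case
    using harris_step_inequality[OF assms(2,3) without_e with_e]
    unfolding f1_def g1_def weighted_subset_sum_insert[OF insert.hyps]
    by (simp add: distrib_right)
qed

definition down_closed_on :: "'a set \<Rightarrow> 'a set set \<Rightarrow> bool" where
  "down_closed_on E F \<longleftrightarrow> (\<forall>A B. A \<subseteq> E \<longrightarrow> B \<subseteq> A \<longrightarrow> A \<in> F \<longrightarrow> B \<in> F)"

definition depends_only_on :: "'a set \<Rightarrow> 'a set \<Rightarrow> 'a set set \<Rightarrow> bool" where
  "depends_only_on E D F \<longleftrightarrow> (\<forall>A B. A \<subseteq> E \<longrightarrow> B \<subseteq> E \<longrightarrow> A \<inter> D = B \<inter> D \<longrightarrow> (A \<in> F \<longleftrightarrow> B \<in> F))"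

lemma weighted_subset_sum_harris_events:
  assumes "finite E" "\<And>e. 0 \<le> a e" "\<And>e. 0 \<le> b e"
    and "down_closed_on E F" "depends_only_on E D F"
    and "\<And>A e. A \<subseteq> E \<Longrightarrow> e \<in> E \<Longrightarrow> e \<in> D \<Longrightarrow> A \<in> U \<Longrightarrow> insert e A \<in> U"
  shows "weighted_subset_sum a b E (indicator (F \<inter> U)) * weighted_subset_sum a b E (\<lambda>_. 1)
    \<le> weighted_subset_sum a b E (indicator F) * weighted_subset_sum a b E (indicator U)"
proof -
  have down: "B \<in> F" if "A \<subseteq> E" "B \<subseteq> A" "A \<in> F" for A B
    using assms(4) that unfolding down_closed_on_def by blast
  have dep: "A \<in> F \<longleftrightarrow> B \<in> F" if "A \<subseteq> E" "B \<subseteq> E" "A \<inter> D = B \<inter> D" for A B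
    using assms(5) that unfolding depends_only_on_def by blast
  have "weighted_subset_sum a b E (\<lambda>A. indicator F A * indicator U A) * weighted_subset_sum a b E (\<lambda>_. 1)
    \<le> weighted_subset_sum a b E (indicator F) * weighted_subset_sum a b E (indicator U)"
  proof (rule weighted_subset_sum_harris[OF assms(1-3), of D])
    fix A e assume A: "A \<subseteq> E" and e: "e \<in> E"
    then have "insert e A \<subseteq> E" by simp
    show "indicator F (insert e A) = (indicator F A :: real)" if "e \<notin> D"
      using dep[OF \<open>insert e A \<subseteq> E\<close> A] that by (simp add: indicator_def)
    show "indicator F (insert e A) \<le> (indicator F A :: real)"
      using down[OF \<open>insert e A \<subseteq> E\<close>, of A] by (simp add: indicator_def subset_insertI)
    show "indicator U A \<le> (indicator U (insert e A) :: real)" if "e \<in> D"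
      using assms(6)[OF A e that] by (simp add: indicator_def)
  qed
  then show ?thesis by (simp only: indicator_inter_arith[symmetric])
qed

lemma weighted_subset_sum_harris_union_bound:
  fixes F U :: "'i \<Rightarrow> 'a set set" and D :: "'i \<Rightarrow> 'a set" and N :: nat
  assumes "finite E" "\<And>e. 0 \<le> a e" "\<And>e. 0 \<le> b e" "finite I" "0 \<le> \<xi>"
    and "\<And>i. i \<in> I \<Longrightarrow> down_closed_on E (F i)" "\<And>i. i \<in> I \<Longrightarrow> depends_only_on E (D i) (F i)"
    and "\<And>i A e. i \<in> I \<Longrightarrow> A \<subseteq> E \<Longrightarrow> e \<in> E \<Longrightarrow> e \<in> D i \<Longrightarrow> A \<in> U i \<Longrightarrow> insert e A \<in> U i"
    and "\<And>i. i \<in> I \<Longrightarrow> weighted_subset_sum a b E (indicator (F i)) \<le> \<xi> * weighted_subset_sum a b E (\<lambda>_. 1)"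
    and "\<And>A. A \<subseteq> E \<Longrightarrow> A \<in> R \<Longrightarrow> \<exists>i\<in>I. A \<in> F i \<inter> U i"
    and "\<And>A. A \<subseteq> E \<Longrightarrow> card {i \<in> I. A \<in> U i} \<le> N"
  shows "weighted_subset_sum a b E (indicator R) \<le> real N * \<xi> * weighted_subset_sum a b E (\<lambda>_. 1)"
proof -
  let ?W = "weighted_subset_sum a b E"
  have W_mono: "?W h \<le> ?W h'" if "\<And>A. A \<subseteq> E \<Longrightarrow> h A \<le> h' A" for h h'
    using weighted_subset_sum_mono[OF assms(2,3) that] .
  have W_indicator: "0 \<le> ?W (indicator X)" "?W (indicator X) \<le> ?W (\<lambda>_. 1)" for X :: "'a set set"
    by (auto intro!: weighted_subset_sum_nonneg W_mono assms(2,3) simp: indicator_def)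
  show ?thesis
  proof (cases "?W (\<lambda>_. 1) = 0")
    case True
    then show ?thesis using W_indicator[of R] by simp
  next
    case False
    then have W1_pos: "0 < ?W (\<lambda>_. 1)" using W_indicator[of "{}"] by linarith
    have each: "?W (indicator (F i \<inter> U i)) \<le> \<xi> * ?W (indicator (U i))" if "i \<in> I" for i
    proof -
      have "?W (indicator (F i \<inter> U i)) * ?W (\<lambda>_. 1) \<le> ?W (indicator (F i)) * ?W (indicator (U i))"
        by (rule weighted_subset_sum_harris_events[OF assms(1-3) assms(6-8)[OF that]])
      also have "\<dots> \<le> (\<xi> * ?W (\<lambda>_. 1)) * ?W (indicator (U i))"
        using that assms(9) W_indicator by (intro mult_right_mono)
      finally show ?thesis using W1_pos by (simp add: algebra_simps)
    qed
    have "?W (indicator R) \<le> ?W (\<lambda>A. \<Sum>i\<in>I. indicator (F i \<inter> U i) A)"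
    proof (rule W_mono)
      fix A assume "A \<subseteq> E"
      show "indicator R A \<le> (\<Sum>i\<in>I. indicator (F i \<inter> U i) A :: real)"
      proof (cases "A \<in> R")
        case True
        then obtain i where "i \<in> I" "A \<in> F i \<inter> U i" using assms(10) \<open>A \<subseteq> E\<close> by blast
        then show ?thesis
          using member_le_sum[of i I "\<lambda>i. indicator (F i \<inter> U i) A :: real"] assms(4) True
          by simp
      qed (simp add: sum_nonneg)
    qed
    also have "\<dots> = (\<Sum>i\<in>I. ?W (indicator (F i \<inter> U i)))"
      by (rule weighted_subset_sum_sum)
    also have "\<dots> \<le> (\<Sum>i\<in>I. \<xi> * ?W (indicator (U i)))"
      by (rule sum_mono) (rule each)
    also have "\<dots> = \<xi> * ?W (\<lambda>A. \<Sum>i\<in>I. indicator (U i) A)"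
      by (simp add: weighted_subset_sum_sum sum_distrib_left)
    also have "\<dots> \<le> \<xi> * ?W (\<lambda>_. real N)"
    proof (intro mult_left_mono W_mono assms(5))
      fix A assume "A \<subseteq> E"
      have "(\<Sum>i\<in>I. indicator (U i) A :: real) = real (card {i \<in> I. A \<in> U i})"
        using assms(4) by (simp add: indicator_def sum.If_cases Int_def)
      then show "(\<Sum>i\<in>I. indicator (U i) A) \<le> real N"
        using assms(11)[OF \<open>A \<subseteq> E\<close>] by simp
    qed
    also have "\<dots> = real N * \<xi> * ?W (\<lambda>_. 1)"
      using weighted_subset_sum_cmult[of a b E "real N" "\<lambda>_. 1"] by simp
    finally show ?thesis .
  qed
qed

lemma finite_all_pairs: "finite (all_pairs n)"
  unfolding all_pairs_def by (rule finite_subset[of _ "Pow {1..n}"]) auto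

lemma coloured_graph_edges_subset_all_pairs:
  "coloured_graph n r VQ col EQ \<Longrightarrow> EQ \<subseteq> all_pairs n"
  unfolding coloured_graph_def all_pairs_def by blast

lemma gnp_prob_conditional_eq_weighted_subset_sum:
  assumes "EQ \<subseteq> all_pairs n"
  shows "gnp_prob n p (A \<inter> {G. EQ \<subseteq> G}) =
    weighted_subset_sum (\<lambda>_. p) (\<lambda>e. if e \<in> EQ then 0 else 1 - p) (all_pairs n) (indicator A)"
  unfolding gnp_prob_def weighted_subset_sum_def
proof (rule sum.cong[OF refl])
  fix G assume G: "G \<in> Pow (all_pairs n)"
  then have "finite G" using finite_all_pairs by (auto intro: finite_subset)
  show "(if G \<in> A \<inter> {G. EQ \<subseteq> G} then p ^ card G * (1 - p) ^ (card (all_pairs n) - card G) else 0) =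
      (\<Prod>e\<in>G. p) * (\<Prod>e\<in>all_pairs n - G. if e \<in> EQ then 0 else 1 - p) * indicator A G"
  proof (cases "EQ \<subseteq> G")
    case True
    then have "(\<Prod>e\<in>all_pairs n - G. if e \<in> EQ then 0 else 1 - p) = (\<Prod>e\<in>all_pairs n - G. 1 - p)"
      by (intro prod.cong) auto
    also have "\<dots> = (1 - p) ^ (card (all_pairs n) - card G)"
      using G \<open>finite G\<close> by (simp add: card_Diff_subset)
    finally show ?thesis using True by (simp add: indicator_def)
  next
    case False
    then have "(\<Prod>e\<in>all_pairs n - G. if e \<in> EQ then 0 else 1 - p) = 0"
      using assms finite_all_pairs by (intro prod_zero) auto
    then show ?thesis using False by simp
  qed
qed

lemma gnp_prob_nonneg: "0 \<le> p \<Longrightarrow> p \<le> 1 \<Longrightarrow> 0 \<le> gnp_prob n p A"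
  unfolding gnp_prob_def by (intro sum_nonneg) auto

lemma gnp_cond_nonneg: "0 \<le> p \<Longrightarrow> p \<le> 1 \<Longrightarrow> 0 \<le> gnp_cond n p A B"
  unfolding gnp_cond_def by (simp add: gnp_prob_nonneg)

text \<open>If \<open>Pr(Q \<subseteq> G) = 0\<close> both sides hold, the left one because \<open>x / 0 = 0\<close>.\<close>
lemma gnp_cond_le_iff:
  assumes "EQ \<subseteq> all_pairs n" "0 \<le> p" "p \<le> 1" "0 \<le> c"
  shows "gnp_cond n p A {G. EQ \<subseteq> G} \<le> c \<longleftrightarrow>
    weighted_subset_sum (\<lambda>_. p) (\<lambda>e. if e \<in> EQ then 0 else 1 - p) (all_pairs n) (indicator A)
      \<le> c * weighted_subset_sum (\<lambda>_. p) (\<lambda>e. if e \<in> EQ then 0 else 1 - p) (all_pairs n) (\<lambda>_. 1)"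
proof -
  let ?W = "weighted_subset_sum (\<lambda>_. p) (\<lambda>e. if e \<in> EQ then 0 else 1 - p) (all_pairs n)"
  have W: "gnp_prob n p (X \<inter> {G. EQ \<subseteq> G}) = ?W (indicator X)" for X
    by (rule gnp_prob_conditional_eq_weighted_subset_sum[OF assms(1)])
  have "?W (indicator A) \<le> ?W (\<lambda>_. 1)"
    using assms(2,3) by (intro weighted_subset_sum_mono) (auto simp: indicator_def)
  moreover have "0 \<le> ?W (indicator A)"
    using assms(2,3) by (intro weighted_subset_sum_nonneg) auto
  ultimately show ?thesis
    using W[of A] W[of UNIV] assms(4) unfolding gnp_cond_def
    by (cases "?W (\<lambda>_. 1) = 0") (auto simp: pos_divide_le_eq)
qed

lemma finite_tuples: "finite {S. is_tuple r S \<and> (\<forall>i\<in>{1..r}. S i \<subseteq> {1..n})}"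
proof (rule finite_subset)
  show "{S. is_tuple r S \<and> (\<forall>i\<in>{1..r}. S i \<subseteq> {1..n})}
     \<subseteq> {S. \<forall>i. (i \<in> {1..r} \<longrightarrow> S i \<in> Pow {1..n}) \<and> (i \<notin> {1..r} \<longrightarrow> S i = {})}"
    unfolding is_tuple_def by auto
qed (rule finite_set_of_finite_funs; simp)

lemma finite_balanced_cuts: "(\<And>P. P \<in> C \<Longrightarrow> balanced_cut n r \<delta> P) \<Longrightarrow> finite C"
  by (rule finite_subset[OF _ finite_tuples[of r n]])
    (fastforce simp: balanced_cut_def is_cut_def)

lemma cequiv_cong_maxcut: "maxcut r C G = maxcut r C G' \<Longrightarrow> cequiv r C G = cequiv r C G'"
  unfolding cequiv_def by simp

lemma components_subset: "K \<in> components n r C G \<Longrightarrow> K \<subseteq> {1..n}"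
  unfolding components_def by auto

lemma components_disjoint:
  assumes "K \<in> components n r C G" "K' \<in> components n r C G" "K \<noteq> K'"
  shows "K \<inter> K' = {}"
proof (rule ccontr)
  obtain x x' where K: "K = {y \<in> {1..n}. cequiv r C G x y}" and K': "K' = {y \<in> {1..n}. cequiv r C G x' y}"
    using assms(1,2) unfolding components_def by auto
  assume "K \<inter> K' \<noteq> {}"
  then obtain z where "cequiv r C G x z" "cequiv r C G x' z" using K K' by auto
  then have "cequiv r C G x = cequiv r C G x'" unfolding cequiv_def by (auto intro!: HOL.ext)
  then show False using assms(3) K K' by simp
qed

lemma component_subset_part:
  assumes "K \<in> components n r C G" "P \<in> maxcut r C G" "i \<in> {1..r}" "x \<in> K" "x \<in> P i"
  shows "K \<subseteq> P i"
proof -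
  obtain x0 where "K = {y \<in> {1..n}. cequiv r C G x0 y}" using assms(1) unfolding components_def by auto
  then show ?thesis using assms(2-5) unfolding cequiv_def by auto
qed

text \<open>Every cut gains at most one edge, and every maximum cut gains exactly one.\<close>
lemma maxcut_insert:
  assumes "finite C" "C \<noteq> {}" "finite G" "\<And>P. P \<in> maxcut r C G \<Longrightarrow> e \<in> ext r P"
  shows "maxcut r C (insert e G) = maxcut r C G"
proof (cases "e \<in> G")
  case False
  define v where "v G' P = card (G' \<inter> ext r P)" for G' P
  have v_insert: "v (insert e G) P = v G P + (if e \<in> ext r P then 1 else 0)" for P
    unfolding v_def using \<open>finite G\<close> False by (simp add: insert_absorb)
  have maxcut_v: "maxcut r C G' = {P \<in> C. v G' P = Max (v G' ` C)}" for G'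
    unfolding maxcut_def bval_def v_def ..
  have le_max: "P \<in> C \<Longrightarrow> v G P \<le> Max (v G ` C)" for P using assms(1) by simp
  have "Max (v G ` C) \<in> v G ` C" using assms(1,2) by (intro Max_in) auto
  then obtain P0 where P0: "P0 \<in> C" "v G P0 = Max (v G ` C)" by auto
  have "Max (v (insert e G) ` C) = Max (v G ` C) + 1"
  proof (rule Max_eqI)
    show "finite (v (insert e G) ` C)" using assms(1) by simp
    show "w \<le> Max (v G ` C) + 1" if w: "w \<in> v (insert e G) ` C" for w
    proof -
      obtain P where "P \<in> C" "w = v (insert e G) P" using w by blast
      then show ?thesis using le_max[of P] by (simp add: v_insert)
    qed
    show "Max (v G ` C) + 1 \<in> v (insert e G) ` C"
      using P0 assms(4) unfolding maxcut_v by (auto simp: v_insert intro!: image_eqI[of _ _ P0])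
  qed
  then show ?thesis
    using assms(4) unfolding maxcut_v by (auto simp: v_insert split: if_splits) (use le_max in fastforce)
qed (simp add: insert_absorb)

lemma balanced_part_bound_le_two_core_bounds:
  fixes \<alpha> \<delta> :: real
  assumes "r \<ge> 2" "\<delta> \<le> 1 / (2 * real r)" "\<alpha> < 1 / (4 * real r * (real r + 1))"
  shows "(1 + \<delta>) * real n / real r \<le> 2 * ((1 - 4 * real r * \<alpha>) * real n / real r)"
proof -
  have "\<delta> \<le> 1 / 4"
    using assms(1,2) order_trans[OF assms(2), of "1/4"] by (simp add: field_simps)
  moreover have "4 * real r * \<alpha> \<le> 1 / 3"
  proof (cases "\<alpha> \<le> 0")
    case False
    have "0 < 4 * real r * (real r + 1)" using assms(1) by simp
    then have "4 * real r * \<alpha> * (real r + 1) < 1"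
      using assms(3) by (simp add: pos_less_divide_eq mult_ac)
    moreover have "4 * real r * \<alpha> * 3 \<le> 4 * real r * \<alpha> * (real r + 1)"
      using assms(1) False by (intro mult_left_mono) auto
    ultimately show ?thesis by linarith
  qed (use mult_nonneg_nonpos[of "real r" \<alpha>] in simp)
  ultimately have "1 + \<delta> \<le> 2 * (1 - 4 * real r * \<alpha>)" by (simp add: algebra_simps)
  then have "(1 + \<delta>) * real n \<le> 2 * (1 - 4 * real r * \<alpha>) * real n"
    by (intro mult_right_mono) auto
  then show ?thesis using divide_right_mono[of _ _ "real r"] by (simp add: algebra_simps)
qed

lemma core_components_in_distinct_parts:
  fixes \<alpha> \<delta> :: real
  assumes "r \<ge> 2" "\<delta> \<le> 1 / (2 * real r)" "\<alpha> < 1 / (4 * real r * (real r + 1))"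
    and "P \<in> maxcut r C G" "balanced_cut n r \<delta> P"
    and "K \<in> core n r \<alpha> C G" "K' \<in> core n r \<alpha> C G" "K \<noteq> K'"
    and "i \<in> {1..r}" "x \<in> K \<inter> P i" "y \<in> K' \<inter> P i"
  shows False
proof -
  have K: "K \<in> components n r C G" "K' \<in> components n r C G"
    using assms(6,7) unfolding core_def by auto
  have "P i \<subseteq> {1..n}" using assms(5,9) unfolding balanced_cut_def is_cut_def by blast
  then have "finite (P i)" by (rule finite_subset) simp
  have "K \<union> K' \<subseteq> P i"
    using component_subset_part[OF K(1) assms(4,9)] component_subset_part[OF K(2) assms(4,9)] assms(10,11)
    by blast
  then have "card K + card K' = card (K \<union> K')"
    using components_disjoint[OF K assms(8)] \<open>finite (P i)\<close>
    by (intro card_Un_disjoint[symmetric]) (auto intro: finite_subset)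
  also have "\<dots> \<le> card (P i)" by (rule card_mono) fact+
  finally have "card K + card K' \<le> card (P i)" .
  moreover have "real (card (P i)) \<le> (1 + \<delta>) * real n / real r"
    using assms(5,9) unfolding balanced_cut_def by blast
  moreover have "real (card K) > (1 - 4 * real r * \<alpha>) * real n / real r"
    "real (card K') > (1 - 4 * real r * \<alpha>) * real n / real r"
    using assms(6,7) unfolding core_def by auto
  ultimately show False
    using balanced_part_bound_le_two_core_bounds[OF assms(1-3), of n] by linarith
qed

lemma maxcut_insert_edge_between_core_components:
  fixes \<alpha> \<delta> :: real
  assumes "r \<ge> 2" "\<delta> \<le> 1 / (2 * real r)" "\<alpha> < 1 / (4 * real r * (real r + 1))"
    and "C \<noteq> {}" "\<And>P. P \<in> C \<Longrightarrow> balanced_cut n r \<delta> P" "finite G"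
    and "inj_on S {1..r}" "S ` {1..r} = core n r \<alpha> C G" "e \<in> ext r S"
  shows "maxcut r C (insert e G) = maxcut r C G"
proof (rule maxcut_insert[OF finite_balanced_cuts[OF assms(5)] assms(4,6)])
  fix P assume P: "P \<in> maxcut r C G"
  then have cut: "balanced_cut n r \<delta> P" using assms(5) unfolding maxcut_def by blast
  obtain x y i j where e: "e = {x, y}" "i \<in> {1..r}" "j \<in> {1..r}" "i \<noteq> j" "x \<in> S i" "y \<in> S j"
    using assms(9) unfolding ext_def by blast
  have core: "S i \<in> core n r \<alpha> C G" "S j \<in> core n r \<alpha> C G" "S i \<noteq> S j"
    using assms(7,8) e(2-4) by (auto dest: inj_onD)
  then have "x \<in> {1..n}" "y \<in> {1..n}"
    using e(5,6) components_subset unfolding core_def by blast+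
  then obtain a b where ab: "a \<in> {1..r}" "x \<in> P a" "b \<in> {1..r}" "y \<in> P b"
    using cut unfolding balanced_cut_def is_cut_def by blast
  have "a \<noteq> b"
    using core_components_in_distinct_parts[OF assms(1-3) P cut core, of a x y] e(5,6) ab by blast
  then show "e \<in> ext r P" unfolding ext_def using e(1) ab by blast
qed

definition labellings :: "nat \<Rightarrow> nat set set \<Rightarrow> (nat \<Rightarrow> nat set) set" where
  "labellings r T = {S. is_tuple r S \<and> inj_on S {1..r} \<and> S ` {1..r} = T}"

lemma labellings_as_permutations:
  "inj_on (\<lambda>S. map S [1..<Suc r]) (labellings r T)"
  "(\<lambda>S. map S [1..<Suc r]) ` labellings r T \<subseteq> permutations_of_set T"
proof -
  show "inj_on (\<lambda>S. map S [1..<Suc r]) (labellings r T)"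
  proof (rule inj_onI)
    fix S S' assume S: "S \<in> labellings r T" "S' \<in> labellings r T"
      and eq: "map S [1..<Suc r] = map S' [1..<Suc r]"
    show "S = S'"
    proof
      fix i
      show "S i = S' i"
      proof (cases "i \<in> {1..r}")
        case True
        then show ?thesis using eq by (auto simp: map_eq_conv simp del: upt_Suc)
      next
        case False
        then show ?thesis using S unfolding labellings_def is_tuple_def by simp
      qed
    qed
  qed
  show "(\<lambda>S. map S [1..<Suc r]) ` labellings r T \<subseteq> permutations_of_set T"
    unfolding labellings_def permutations_of_set_def
    by (auto simp: distinct_map atLeastLessThanSuc_atLeastAtMost simp del: upt_Suc)
qed

lemma finite_labellings: "finite (labellings r T)"
  using labellings_as_permutations by (rule inj_on_finite) simp

lemma card_labellings_le: "card (labellings r T) \<le> fact r"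
proof (cases "labellings r T = {}")
  case False
  then have "finite T" "card T = r" unfolding labellings_def by (auto simp: card_image)
  then show ?thesis
    using card_inj_on_le[OF labellings_as_permutations[of r T] finite_permutations_of_set] by simp
qed simp

definition rigid_with_core ::
    "nat \<Rightarrow> nat \<Rightarrow> real \<Rightarrow> (nat \<Rightarrow> nat set) set \<Rightarrow> (nat \<Rightarrow> nat set) \<Rightarrow> nat set set set" where
  "rigid_with_core n r \<alpha> C S = {G. rigid n r \<alpha> C G \<and> S \<in> labellings r (core n r \<alpha> C G)}"

lemma rigid_with_core_insert_ext:
  fixes \<alpha> \<delta> :: real
  assumes "r \<ge> 2" "\<delta> \<le> 1 / (2 * real r)" "\<alpha> < 1 / (4 * real r * (real r + 1))"
    and "C \<noteq> {}" "\<And>P. P \<in> C \<Longrightarrow> balanced_cut n r \<delta> P" "finite G"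
    and "e \<in> ext r S" "G \<in> rigid_with_core n r \<alpha> C S"
  shows "insert e G \<in> rigid_with_core n r \<alpha> C S"
proof -
  have "inj_on S {1..r}" "S ` {1..r} = core n r \<alpha> C G"
    using assms(8) unfolding rigid_with_core_def labellings_def by auto
  then have "cequiv r C (insert e G) = cequiv r C G"
    by (intro cequiv_cong_maxcut maxcut_insert_edge_between_core_components[OF assms(1-6) _ _ assms(7)])
  then show ?thesis
    using assms(8) unfolding rigid_with_core_def rigid_def core_def components_def by simp
qed

definition admissible_tuple :: "nat \<Rightarrow> nat \<Rightarrow> real \<Rightarrow> nat set \<Rightarrow> (nat \<Rightarrow> nat) \<Rightarrow> (nat \<Rightarrow> nat set) \<Rightarrow> bool" where
  "admissible_tuple n r \<alpha> VQ col S \<longleftrightarrow> is_tuple r S \<and> pw_disjoint r S \<and> (\<forall>i\<in>{1..r}. S i \<subseteq> {1..n}) \<and>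
     compatible r VQ col S \<and> (\<forall>i\<in>{1..r}. real (card (S i)) \<ge> (1 - 4 * real r * \<alpha>) * real n / real r)"

lemma admissible_tuple_if_balanced_cut:
  fixes \<alpha> \<delta> :: real
  assumes "r \<ge> 1" "0 \<le> \<alpha>" "\<delta> \<le> \<alpha>" "balanced_cut n r \<delta> P" "compatible r VQ col P"
  shows "admissible_tuple n r \<alpha> VQ col P"
proof -
  have "\<alpha> \<le> 4 * real r * \<alpha>" using assms(1,2) mult_right_mono[of 1 "4 * real r" \<alpha>] by simp
  then have "(1 - 4 * real r * \<alpha>) * real n / real r \<le> (1 - \<delta>) * real n / real r"
    using assms(3) by (intro divide_right_mono mult_right_mono) auto
  then show ?thesis
    using assms(4,5) unfolding admissible_tuple_def balanced_cut_def is_cut_def by fastforce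
qed

lemma admissible_tuple_if_labels_core:
  assumes "S \<in> labellings r (core n r \<alpha> C G)" "compatible r VQ col S"
  shows "admissible_tuple n r \<alpha> VQ col S"
proof -
  have S: "S i \<in> core n r \<alpha> C G" if "i \<in> {1..r}" for i
    using assms(1) that unfolding labellings_def by blast
  have "pw_disjoint r S"
    unfolding pw_disjoint_def
  proof (intro ballI impI)
    fix i j assume "i \<in> {1..r}" "j \<in> {1..r}" "i \<noteq> j"
    moreover have "S i \<noteq> S j"
      using assms(1) \<open>i \<noteq> j\<close> \<open>i \<in> {1..r}\<close> \<open>j \<in> {1..r}\<close> unfolding labellings_def by (auto dest: inj_onD)
    ultimately show "S i \<inter> S j = {}"
      using S components_disjoint unfolding core_def by blast
  qed
  moreover have "S i \<subseteq> {1..n}" if "i \<in> {1..r}" for i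
    using S[OF that] components_subset unfolding core_def by blast
  moreover have "real (card (S i)) \<ge> (1 - 4 * real r * \<alpha>) * real n / real r" if "i \<in> {1..r}" for i
    using S[OF that] unfolding core_def by simp
  ultimately show ?thesis
    using assms unfolding admissible_tuple_def labellings_def by blast
qed

lemma labelled_core_event_covered:
  assumes "G \<in> {G. rigid n r \<alpha> C G \<and> (\<exists>S. is_tuple r S \<and> inj_on S {1..r} \<and>
    S ` {1..r} = core n r \<alpha> C G \<and> compatible r VQ col S \<and> G \<in> F S)}"
  shows "\<exists>S\<in>{S. admissible_tuple n r \<alpha> VQ col S}. G \<in> F S \<inter> rigid_with_core n r \<alpha> C S"
proof -
  obtain S where S: "S \<in> labellings r (core n r \<alpha> C G)" "compatible r VQ col S" "G \<in> F S"
    and "rigid n r \<alpha> C G"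
    using assms unfolding labellings_def by blast
  then show ?thesis
    using admissible_tuple_if_labels_core[OF S(1,2)] unfolding rigid_with_core_def by blast
qed

lemma card_rigid_with_core_le: "card {S \<in> I. G \<in> rigid_with_core n r \<alpha> C S} \<le> fact r"
  using card_mono[OF finite_labellings, of "{S \<in> I. G \<in> rigid_with_core n r \<alpha> C S}" r]
    card_labellings_le[of r "core n r \<alpha> C G"]
  unfolding rigid_with_core_def by fastforce

theorem mainTheorem17:
  fixes n r :: nat and \<alpha> \<delta> \<xi> p :: real
    and VQ :: "nat set" and col :: "nat \<Rightarrow> nat" and EQ :: "nat set set"
    and C :: "(nat \<Rightarrow> nat set) set"
    and F :: "(nat \<Rightarrow> nat set) \<Rightarrow> nat set set set"
  assumes "r \<ge> 2" and "\<alpha> > 0" and "\<delta> > 0" and "\<delta> \<le> \<alpha>"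
    and "\<delta> \<le> 1 / (2 * real r)" and "\<alpha> < 1 / (4 * real r * (real r + 1))"
    and "0 \<le> p" and "p \<le> 1"
    and "coloured_graph n r VQ col EQ"
    and "C \<noteq> {}"
    and "\<forall>P\<in>C. balanced_cut n r \<delta> P \<and> compatible r VQ col P"
    and "\<xi> \<le> 1"
    and "\<forall>S. is_tuple r S \<and> pw_disjoint r S \<and> (\<forall>i\<in>{1..r}. S i \<subseteq> {1..n}) \<and>
             compatible r VQ col S \<and>
             (\<forall>i\<in>{1..r}. real (card (S i)) \<ge> (1 - 4 * real r * \<alpha>) * real n / real r) \<longrightarrow>
           (\<forall>G H. G \<subseteq> all_pairs n \<longrightarrow> H \<subseteq> G \<longrightarrow> G \<in> F S \<longrightarrow> H \<in> F S) \<and>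
           (\<forall>G H. G \<subseteq> all_pairs n \<longrightarrow> H \<subseteq> all_pairs n \<longrightarrow>
               G \<inter> ext r S = H \<inter> ext r S \<longrightarrow> (G \<in> F S \<longleftrightarrow> H \<in> F S)) \<and>
           gnp_cond n p (F S) {G. EQ \<subseteq> G} \<le> \<xi>"
  shows "gnp_cond n p
           {G. rigid n r \<alpha> C G \<and>
               (\<exists>S. is_tuple r S \<and> inj_on S {1..r} \<and> S ` {1..r} = core n r \<alpha> C G \<and>
                    compatible r VQ col S \<and> G \<in> F S)}
           {G. EQ \<subseteq> G}
         \<le> fact r * \<xi>"
proof -
  let ?W = "weighted_subset_sum (\<lambda>_. p) (\<lambda>e. if e \<in> EQ then 0 else 1 - p) (all_pairs n)"
  let ?I = "{S. admissible_tuple n r \<alpha> VQ col S}"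
  let ?R = "{G. rigid n r \<alpha> C G \<and> (\<exists>S. is_tuple r S \<and> inj_on S {1..r} \<and>
      S ` {1..r} = core n r \<alpha> C G \<and> compatible r VQ col S \<and> G \<in> F S)}"
  have EQ: "EQ \<subseteq> all_pairs n" using assms(9) by (rule coloured_graph_edges_subset_all_pairs)
  have F: "down_closed_on (all_pairs n) (F S) \<and> depends_only_on (all_pairs n) (ext r S) (F S) \<and>
      gnp_cond n p (F S) {G. EQ \<subseteq> G} \<le> \<xi>" if "S \<in> ?I" for S
    using assms(13) that unfolding admissible_tuple_def down_closed_on_def depends_only_on_def by blast
  obtain P where "P \<in> C" using assms(10) by blast
  then have "P \<in> ?I" using assms(1,2,4,11) by (auto intro: admissible_tuple_if_balanced_cut)
  then have "0 \<le> \<xi>"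
    using F[OF \<open>P \<in> ?I\<close>] gnp_cond_nonneg[OF assms(7,8), of n "F P" "{G. EQ \<subseteq> G}"] by linarith
  have "?W (indicator ?R) \<le> real (fact r) * \<xi> * ?W (\<lambda>_. 1)"
  proof (rule weighted_subset_sum_harris_union_bound[where I = ?I and F = F and D = "ext r"
        and U = "rigid_with_core n r \<alpha> C"])
    show "finite ?I"
      by (rule finite_subset[OF _ finite_tuples[of r n]]) (auto simp: admissible_tuple_def)
    show "insert e A \<in> rigid_with_core n r \<alpha> C S"
      if "A \<subseteq> all_pairs n" "e \<in> ext r S" "A \<in> rigid_with_core n r \<alpha> C S" for S A e
      using that assms(1,5,6,10,11) finite_all_pairs
      by (intro rigid_with_core_insert_ext[where \<delta> = \<delta>]) (auto intro: finite_subset)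
    show "?W (indicator (F S)) \<le> \<xi> * ?W (\<lambda>_. 1)" if "S \<in> ?I" for S
      using F[OF that] gnp_cond_le_iff[OF EQ assms(7,8) \<open>0 \<le> \<xi>\<close>] by blast
    show "\<exists>S\<in>?I. G \<in> F S \<inter> rigid_with_core n r \<alpha> C S" if "G \<in> ?R" for G
      using that by (rule labelled_core_event_covered)
    show "down_closed_on (all_pairs n) (F S)" "depends_only_on (all_pairs n) (ext r S) (F S)"
      if "S \<in> ?I" for S
      using F[OF that] by simp_all
    show "card {S \<in> ?I. G \<in> rigid_with_core n r \<alpha> C S} \<le> fact r" for G
      by (rule card_rigid_with_core_le)
  qed (use finite_all_pairs assms(7,8) \<open>0 \<le> \<xi>\<close> in auto)
  then show ?thesis
    using gnp_cond_le_iff[OF EQ assms(7,8)] \<open>0 \<le> \<xi>\<close> by simp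
qed

end
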